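(* Let $N=2$, $v_1<v_2$, prior probabilities $p(v_1),p(v_2)>0$ summing to $1$, and $\lambda,\sigma_Z,T>0$. Let the signal be $\tilde z\sim N(0,\sigma_Z^2T)$ with the optimal posteriors $p(v_n|z)=e^{(v_nz+\mu_n)/\lambda}/\sum_{n'=1}^2e^{(v_{n'}z+\mu_{n'})/\lambda}$, where $(\mu_1,\mu_2)$ is chosen (uniquely up to a common additive constant) so that $\mathbb E[p(v_n|\tilde z)]=p(v_n)$ for $n=1,2$. Then the density of the conditional expected payoff $\mathbb E[\tilde v|\tilde z]=\sum_nv_np(v_n|\tilde z)$ is $$f_s(v)=\frac{\lambda}{\sigma_Z\sqrt T\,(v_2-v)(v-v_1)}\,\phi\Big(\frac{\lambda}{\sigma_Z\sqrt T(v_1-v_2)}\log\Big(\frac{v_2-v}{v-v_1}\Big)-\frac{\mu_1-\mu_2}{\sigma_Z\sqrt T(v_1-v_2)}\Big),\qquad v\in(v_1,v_2),$$ where $\phi$ is the standard normal density.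
   Context: These posteriors are the optimal posteriors of the informed trader's problem of maximizing expected Kyle–Back trading profit minus the mutual-information cost $\lambda I(\tilde s;\tilde v)$ when the normal signal $\tilde z$ is used. *)

theory Defs
  imports "HOL-Probability.Probability"
begin

definition posterior :: "(nat \<Rightarrow> real) \<Rightarrow> (nat \<Rightarrow> real) \<Rightarrow> real \<Rightarrow> nat \<Rightarrow> real \<Rightarrow> real" where
  "posterior v \<mu> lam n z =
     exp ((v n * z + \<mu> n) / lam) / (\<Sum>n'\<in>{1..2::nat}. exp ((v n' * z + \<mu> n') / lam))"

definition cond_exp_payoff :: "(nat \<Rightarrow> real) \<Rightarrow> (nat \<Rightarrow> real) \<Rightarrow> real \<Rightarrow> real \<Rightarrow> real" where
  "cond_exp_payoff v \<mu> lam z = (\<Sum>n\<in>{1..2::nat}. v n * posterior v \<mu> lam n z)"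

end

theory Submission
  imports Defs
begin

text \<open>With two payoff values the conditional expectation is a logistic function of the signal,
  E[v | z] = v_1 + (v_2 - v_1) / (1 + exp (- ((v_2 - v_1) z + \<mu>_2 - \<mu>_1) / \<lambda>)),
  hence a strictly increasing bijection from the real line onto (v_1, v_2) whose inverse is a
  logit. Substituting this inverse into the normal density of the signal gives the claimed density
  on every compact subinterval of (v_1, v_2); as both measures are carried by (v_1, v_2), these
  intervals determine them.\<close>

lemma measure_eqI_Icc_einterval:
  fixes M N :: "real measure" and l u :: ereal
  assumes sets: "sets M = sets borel" "sets N = sets borel"
    and fin: "finite_measure M"
    and null: "- einterval l u \<in> null_sets M" "- einterval l u \<in> null_sets N"
    and Icc: "\<And>a b. l < a \<Longrightarrow> a \<le> b \<Longrightarrow> b < u \<Longrightarrow> emeasure M {a..b} = emeasure N {a..b}"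
  shows "M = N"
proof (rule measure_eqI_lessThan[OF sets])
  show "emeasure M {x<..} < \<infinity>" for x
    using finite_measure.emeasure_finite[OF fin] by (simp add: less_top)
next
  fix c :: real
  define I where "I = einterval (max (ereal c) l) u"
  have "emeasure M I = emeasure N I"
  proof (cases "max (ereal c) l < u")
    case True
    obtain lo hi :: "nat \<Rightarrow> real" where
      I: "I = (\<Union>i. {lo i..hi i})" and "incseq hi" "decseq lo"
      and lo_hi: "\<And>i. lo i < hi i" "\<And>i. max (ereal c) l < lo i" "\<And>i. hi i < u"
      unfolding I_def by (rule einterval_Icc_approximation[OF True]) blast
    have inc: "incseq (\<lambda>i. {lo i..hi i})"
      using \<open>incseq hi\<close> \<open>decseq lo\<close> unfolding incseq_def decseq_def
      by (meson atLeastatMost_subset_iff)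
    have "range (\<lambda>i. {lo i..hi i}) \<subseteq> sets M" "range (\<lambda>i. {lo i..hi i}) \<subseteq> sets N"
      unfolding sets by (simp_all add: image_subset_iff)
    note SUP_eq = this[THEN SUP_emeasure_incseq, OF inc]
    have "l < lo i" "lo i \<le> hi i" "hi i < u" for i
      using lo_hi[of i] by (simp_all add: less_imp_le)
    then have "emeasure M {lo i..hi i} = emeasure N {lo i..hi i}" for i
      by (rule Icc)
    then show ?thesis
      unfolding I SUP_eq[symmetric] by simp
  next
    case False
    have "einterval a u = {}" if "\<not> a < u" for a
      using that by (auto simp: einterval_iff)
    then show ?thesis
      using False by (simp add: I_def)
  qed
  moreover have "I = {c<..} - (- einterval l u)"
    by (auto simp: I_def einterval_def)
  ultimately show "emeasure M {c<..} = emeasure N {c<..}"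
    using null sets by (simp add: emeasure_Diff_null_set del: Diff_Compl)
qed

lemma emeasure_distr_density_Icc:
  fixes f g h h' :: "real \<Rightarrow> real"
  assumes [measurable]: "g \<in> borel_measurable borel" "f \<in> borel_measurable borel"
    and vimage: "g -` {a..b} = {h a..h b}" and "a \<le> b"
    and "\<And>x. x \<in> {a..b} \<Longrightarrow> (h has_real_derivative h' x) (at x)"
    and "continuous_on {a..b} h'" and "\<And>x. x \<in> {a..b} \<Longrightarrow> 0 \<le> h' x"
  shows "emeasure (distr (density lborel f) lborel g) {a..b} =
           (\<integral>\<^sup>+x\<in>{a..b}. ennreal (f (h x) * h' x) \<partial>lborel)"
proof -
  have "emeasure (distr (density lborel f) lborel g) {a..b} =
          (\<integral>\<^sup>+x. ennreal (f x * indicator {h a..h b} x) \<partial>lborel)"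
    by (simp add: emeasure_distr vimage emeasure_density)
       (rule nn_integral_cong; simp split: split_indicator)
  also have "\<dots> = (\<integral>\<^sup>+x. ennreal (f (h x) * h' x * indicator {a..b} x) \<partial>lborel)"
    by (rule nn_integral_substitution) (use assms in \<open>auto simp: set_borel_measurable_def\<close>)
  also have "\<dots> = (\<integral>\<^sup>+x\<in>{a..b}. ennreal (f (h x) * h' x) \<partial>lborel)"
    by (rule nn_integral_cong; simp split: split_indicator)
  finally show ?thesis .
qed

lemma normal_density_eq_std_normal_density:
  assumes "\<sigma> > 0"
  shows "normal_density \<mu> \<sigma> x = std_normal_density ((x - \<mu>) / \<sigma>) / \<sigma>"
  using assms by (simp add: normal_density_def real_sqrt_mult field_simps)

lemma cond_exp_payoff_logistic:
  "cond_exp_payoff v \<mu> lam z =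
     v 1 + (v 2 - v 1) / (1 + exp (- ((v 2 - v 1) * z + \<mu> 2 - \<mu> 1) / lam))"
proof -
  define e where "e = exp ((v 2 * z + \<mu> 2) / lam)"
  define E where "E = exp (- ((v 2 - v 1) * z + \<mu> 2 - \<mu> 1) / lam)"
  have "cond_exp_payoff v \<mu> lam z =
          (v 1 * exp ((v 1 * z + \<mu> 1) / lam) + v 2 * e) / (exp ((v 1 * z + \<mu> 1) / lam) + e)"
    unfolding cond_exp_payoff_def posterior_def e_def
    by (simp add: numeral_2_eq_2 add_divide_distrib)
  also have "exp ((v 1 * z + \<mu> 1) / lam) = e * E"
    unfolding e_def E_def exp_add[symmetric] add_divide_distrib[symmetric]
    by (simp add: algebra_simps)
  also have "(v 1 * (e * E) + v 2 * e) / (e * E + e) = (e * (v 1 * E + v 2)) / (e * (1 + E))"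
    by (simp add: algebra_simps)
  also have "\<dots> = (v 1 * E + v 2) / (1 + E)"
    by (simp add: e_def)
  also have "\<dots> = v 1 + (v 2 - v 1) / (1 + E)"
  proof -
    have "E > 0"
      unfolding E_def by simp
    then have "1 + E \<noteq> 0"
      by simp
    then show ?thesis
      by (simp add: field_simps)
  qed
  finally show ?thesis
    unfolding E_def .
qed

lemma cond_exp_payoff_bounds:
  assumes "v 1 < v 2"
  shows "cond_exp_payoff v \<mu> lam z \<in> {v 1<..<v 2}"
proof -
  define E where "E = exp (- ((v 2 - v 1) * z + \<mu> 2 - \<mu> 1) / lam)"
  have "0 < (v 2 - v 1) / (1 + E)" "(v 2 - v 1) / (1 + E) < v 2 - v 1"
    using assms by (simp_all add: E_def add_pos_pos divide_less_eq)
  then show ?thesis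
    unfolding cond_exp_payoff_logistic E_def[symmetric] by simp
qed

lemma strict_mono_cond_exp_payoff:
  assumes "v 1 < v 2" and "lam > 0"
  shows "strict_mono (cond_exp_payoff v \<mu> lam)"
proof (rule strict_monoI)
  fix z w :: real
  assume "z < w"
  then have "exp (- ((v 2 - v 1) * w + \<mu> 2 - \<mu> 1) / lam) < exp (- ((v 2 - v 1) * z + \<mu> 2 - \<mu> 1) / lam)"
    using assms by (simp add: divide_strict_right_mono)
  then show "cond_exp_payoff v \<mu> lam z < cond_exp_payoff v \<mu> lam w"
    unfolding cond_exp_payoff_logistic using assms
    by (simp add: divide_strict_left_mono add_pos_pos)
qed

definition cond_exp_payoff_inv :: "(nat \<Rightarrow> real) \<Rightarrow> (nat \<Rightarrow> real) \<Rightarrow> real \<Rightarrow> real \<Rightarrow> real" where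
  "cond_exp_payoff_inv v \<mu> lam x = (lam * ln ((x - v 1) / (v 2 - x)) + \<mu> 1 - \<mu> 2) / (v 2 - v 1)"

lemma cond_exp_payoff_inv_inverse:
  assumes "v 1 < x" "x < v 2" and "lam > 0"
  shows "cond_exp_payoff v \<mu> lam (cond_exp_payoff_inv v \<mu> lam x) = x"
proof -
  have E: "exp (- ((v 2 - v 1) * cond_exp_payoff_inv v \<mu> lam x + \<mu> 2 - \<mu> 1) / lam) = (v 2 - x) / (x - v 1)"
    using assms by (simp add: cond_exp_payoff_inv_def exp_minus)
  have "x - v 1 \<noteq> 0" "v 2 - v 1 \<noteq> 0"
    using assms by simp_all
  then show ?thesis
    unfolding cond_exp_payoff_logistic E by (simp add: field_simps)
qed

lemma vimage_cond_exp_payoff_Icc: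
  assumes "v 1 < a" "a \<le> b" "b < v 2" and "lam > 0"
  shows "cond_exp_payoff v \<mu> lam -` {a..b} =
           {cond_exp_payoff_inv v \<mu> lam a..cond_exp_payoff_inv v \<mu> lam b}"
proof -
  have mono: "strict_mono (cond_exp_payoff v \<mu> lam)"
    using assms by (intro strict_mono_cond_exp_payoff) auto
  have "x \<le> cond_exp_payoff v \<mu> lam z \<longleftrightarrow> cond_exp_payoff_inv v \<mu> lam x \<le> z"
    "cond_exp_payoff v \<mu> lam z \<le> x \<longleftrightarrow> z \<le> cond_exp_payoff_inv v \<mu> lam x"
    if "v 1 < x" "x < v 2" for x z
    using strict_mono_less_eq[OF mono] cond_exp_payoff_inv_inverse[OF that \<open>lam > 0\<close>]
    by metis+
  then show ?thesis
    using assms by force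
qed

lemma has_real_derivative_cond_exp_payoff_inv:
  assumes "v 1 < x" "x < v 2"
  shows "(cond_exp_payoff_inv v \<mu> lam has_real_derivative lam / ((x - v 1) * (v 2 - x))) (at x)"
  unfolding cond_exp_payoff_inv_def[abs_def] using assms
  by (auto intro!: derivative_eq_intros simp: divide_simps)

lemma normal_density_cond_exp_payoff_inv:
  assumes "v 1 < x" "x < v 2" and "s > 0"
  shows "normal_density 0 s (cond_exp_payoff_inv v \<mu> lam x) * (lam / ((x - v 1) * (v 2 - x))) =
           lam / (s * (v 2 - x) * (x - v 1)) *
           std_normal_density (lam / (s * (v 1 - v 2)) * ln ((v 2 - x) / (x - v 1))
                               - (\<mu> 1 - \<mu> 2) / (s * (v 1 - v 2)))"
proof -
  have arg: "lam / (s * (v 1 - v 2)) * ln ((v 2 - x) / (x - v 1)) - (\<mu> 1 - \<mu> 2) / (s * (v 1 - v 2))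
      = cond_exp_payoff_inv v \<mu> lam x / s"
  proof -
    define L where "L = ln ((x - v 1) / (v 2 - x))"
    define D where "D = v 2 - v 1"
    have L: "ln ((v 2 - x) / (x - v 1)) = - L"
      using assms by (simp add: L_def ln_div)
    have D: "v 1 - v 2 = - D" "D \<noteq> 0"
      using assms by (simp_all add: D_def)
    have "lam / (s * (v 1 - v 2)) * ln ((v 2 - x) / (x - v 1)) - (\<mu> 1 - \<mu> 2) / (s * (v 1 - v 2))
            = (lam * L + \<mu> 1 - \<mu> 2) / D / s"
      unfolding L D(1) using D(2) \<open>s > 0\<close> by (simp add: field_simps)
    also have "\<dots> = cond_exp_payoff_inv v \<mu> lam x / s"
      by (simp add: cond_exp_payoff_inv_def L_def D_def)
    finally show ?thesis .
  qed
  have "x - v 1 \<noteq> 0" "v 2 - x \<noteq> 0" "s \<noteq> 0"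
    using assms by simp_all
  then show ?thesis
    unfolding arg normal_density_eq_std_normal_density[OF \<open>s > 0\<close>] by (simp add: field_simps)
qed

theorem distributed_cond_exp_payoff:
  fixes v \<mu> :: "nat \<Rightarrow> real" and lam s :: real
  assumes v: "v 1 < v 2" and lam: "lam > 0" and s: "s > 0"
  shows "distributed (density lborel (normal_density 0 s)) lborel (cond_exp_payoff v \<mu> lam)
           (\<lambda>x. ennreal (if x \<in> {v 1<..<v 2}
              then normal_density 0 s (cond_exp_payoff_inv v \<mu> lam x) * (lam / ((x - v 1) * (v 2 - x)))
              else 0))"
    (is "distributed ?N lborel ?g ?f")
proof -
  have [measurable]: "?g \<in> borel_measurable borel"
    unfolding cond_exp_payoff_def posterior_def by measurable
  have f_meas: "?f \<in> borel_measurable lborel"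
    unfolding cond_exp_payoff_inv_def by measurable
  have "distr ?N lborel ?g = density lborel ?f"
  proof (rule measure_eqI_Icc_einterval[where l = "v 1" and u = "v 2"])
    show "finite_measure (distr ?N lborel ?g)"
      by (intro prob_space.finite_measure prob_space.prob_space_distr prob_space_normal_density s)
        measurable
    have "?g -` (- {v 1<..<v 2}) = {}"
      using cond_exp_payoff_bounds[OF v] by blast
    then show "- einterval (v 1) (v 2) \<in> null_sets (distr ?N lborel ?g)"
      by (simp add: null_sets_distr_iff)
    show "- einterval (v 1) (v 2) \<in> null_sets (density lborel ?f)"
      unfolding null_sets_density_iff[OF f_meas] by (auto intro: AE_I2)
  next
    fix a b
    assume ab: "ereal (v 1) < ereal a" "a \<le> b" "ereal b < ereal (v 2)"
    then have in_range: "x \<in> {v 1<..<v 2}" if "x \<in> {a..b}" for x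
      using that by auto
    have "emeasure (distr ?N lborel ?g) {a..b} =
            (\<integral>\<^sup>+x\<in>{a..b}. ennreal (normal_density 0 s (cond_exp_payoff_inv v \<mu> lam x) *
                                     (lam / ((x - v 1) * (v 2 - x)))) \<partial>lborel)"
    proof (rule emeasure_distr_density_Icc)
      show "?g -` {a..b} = {cond_exp_payoff_inv v \<mu> lam a..cond_exp_payoff_inv v \<mu> lam b}"
        using ab lam by (intro vimage_cond_exp_payoff_Icc) auto
      show "(cond_exp_payoff_inv v \<mu> lam has_real_derivative lam / ((x - v 1) * (v 2 - x))) (at x)"
        if "x \<in> {a..b}" for x
        using in_range[OF that] by (intro has_real_derivative_cond_exp_payoff_inv) auto
      show "continuous_on {a..b} (\<lambda>x. lam / ((x - v 1) * (v 2 - x)))"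
        using in_range by (intro continuous_intros) force
      show "0 \<le> lam / ((x - v 1) * (v 2 - x))" if "x \<in> {a..b}" for x
        using in_range[OF that] lam by simp
    qed (use ab in simp_all)
    also have "\<dots> = emeasure (density lborel ?f) {a..b}"
      by (subst emeasure_density[OF f_meas], simp)
        (rule nn_integral_cong, use in_range in \<open>simp split: split_indicator\<close>)
    finally show "emeasure (distr ?N lborel ?g) {a..b} = emeasure (density lborel ?f) {a..b}" .
  qed simp_all
  then show ?thesis
    unfolding distributed_def using f_meas by simp
qed

theorem corollary1:
  fixes v p \<mu> :: "nat \<Rightarrow> real" and lam \<sigma>Z T :: real
  assumes "v 1 < v 2"
    and "p 1 > 0" and "p 2 > 0" and "p 1 + p 2 = 1"
    and "lam > 0" and "\<sigma>Z > 0" and "T > 0"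
    and "\<forall>n\<in>{1..2::nat}.
           (LINT z|lborel. normal_density 0 (\<sigma>Z * sqrt T) z * posterior v \<mu> lam n z) = p n"
  shows "distributed (density lborel (normal_density 0 (\<sigma>Z * sqrt T))) lborel
           (cond_exp_payoff v \<mu> lam)
           (\<lambda>x. ennreal (if x \<in> {v 1<..<v 2} then
                lam / (\<sigma>Z * sqrt T * (v 2 - x) * (x - v 1)) *
                std_normal_density (lam / (\<sigma>Z * sqrt T * (v 1 - v 2)) * ln ((v 2 - x) / (x - v 1))
                                    - (\<mu> 1 - \<mu> 2) / (\<sigma>Z * sqrt T * (v 1 - v 2)))
              else 0))"
proof -
  have s: "\<sigma>Z * sqrt T > 0"
    using assms by simp
  show ?thesis
    using distributed_cond_exp_payoff[OF \<open>v 1 < v 2\<close> \<open>lam > 0\<close> s, of \<mu>]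
    by (simp only: greaterThanLessThan_iff normal_density_cond_exp_payoff_inv[OF _ _ s] cong: if_cong)
qed

end
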